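(* Let $\alpha>-1$, let $n$ be a positive integer, $\lambda=e^{2\pi i/n}$, $\phi(z)=\lambda z$, and $\psi(z)=\sum_{k=0}^\infty\hat\psi_kz^k$ analytic on $\mathbb{D}$ with $C_{\psi,\phi}$ bounded on $L^2_a(dA_\alpha)$. Suppose $\hat\psi_{np+j}\ne0$ for some integers $p\ge0$ and $0<j<n$. Then $W(C_{\psi,\phi})$ contains the closed elliptical region with foci $\hat\psi_0$ and $\lambda^{np+j}\hat\psi_0$, whose major axis has length $\sqrt{|\hat\psi_0|^2|1-e^{2\pi ij/n}|^2+\frac{(np+j)!\,\Gamma(\alpha+2)}{\Gamma(np+j+\alpha+2)}|\hat\psi_{np+j}|^2}$ and whose minor axis has length $\sqrt{\frac{(np+j)!\,\Gamma(\alpha+2)}{\Gamma(np+j+\alpha+2)}}\,|\hat\psi_{np+j}|$.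
   Context: $\mathbb{D}$ is the open unit disc. $L^2_a(dA_\alpha)$ is the weighted Bergman space of analytic $f$ on $\mathbb{D}$ with $\int_{\mathbb{D}}|f|^2dA_\alpha<\infty$, $dA_{\alpha}(z)=(\alpha+1)(1-|z|^2)^{\alpha}dA(z)$, $dA$ normalized area measure. $C_{\psi,\phi}f=\psi\cdot(f\circ\phi)$. $W(T)=\{\langle Tf,f\rangle:\|f\|=1\}$. *)

theory Defs
  imports "HOL-Complex_Analysis.Complex_Analysis"
begin

definition dA :: "real \<Rightarrow> complex measure" where
  "dA \<alpha> = density lborel
     (\<lambda>z. indicator (ball 0 1) z *
        ennreal ((\<alpha> + 1) / pi * (1 - (cmod z)\<^sup>2) powr \<alpha>))"

definition bergman :: "real \<Rightarrow> (complex \<Rightarrow> complex) set" where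
  "bergman \<alpha> = {f. f holomorphic_on ball 0 1 \<and>
      (\<integral>\<^sup>+ z. ennreal ((cmod (f z))\<^sup>2) \<partial>dA \<alpha>) < \<infinity>}"

definition berg_inner :: "real \<Rightarrow> (complex \<Rightarrow> complex) \<Rightarrow> (complex \<Rightarrow> complex) \<Rightarrow> complex" where
  "berg_inner \<alpha> f g = (\<integral> z. f z * cnj (g z) \<partial>dA \<alpha>)"

definition berg_norm :: "real \<Rightarrow> (complex \<Rightarrow> complex) \<Rightarrow> real" where
  "berg_norm \<alpha> f = sqrt (\<integral> z. (cmod (f z))\<^sup>2 \<partial>dA \<alpha>)"

definition wcomp :: "(complex \<Rightarrow> complex) \<Rightarrow> (complex \<Rightarrow> complex) \<Rightarrow> (complex \<Rightarrow> complex) \<Rightarrow> (complex \<Rightarrow> complex)" where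
  "wcomp \<psi> \<phi> f = (\<lambda>z. \<psi> z * f (\<phi> z))"

definition bounded_on_bergman :: "real \<Rightarrow> ((complex \<Rightarrow> complex) \<Rightarrow> (complex \<Rightarrow> complex)) \<Rightarrow> bool" where
  "bounded_on_bergman \<alpha> T \<longleftrightarrow>
     (\<forall>f\<in>bergman \<alpha>. T f \<in> bergman \<alpha>) \<and>
     (\<exists>M. \<forall>f\<in>bergman \<alpha>. berg_norm \<alpha> (T f) \<le> M * berg_norm \<alpha> f)"

definition num_range :: "real \<Rightarrow> ((complex \<Rightarrow> complex) \<Rightarrow> (complex \<Rightarrow> complex)) \<Rightarrow> complex set" where
  "num_range \<alpha> T = {berg_inner \<alpha> (T f) f | f. f \<in> bergman \<alpha> \<and> berg_norm \<alpha> f = 1}"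

definition taylor_coeff :: "(complex \<Rightarrow> complex) \<Rightarrow> nat \<Rightarrow> complex" where
  "taylor_coeff \<psi> k = (deriv ^^ k) \<psi> 0 / fact k"

definition ellipse_region :: "complex \<Rightarrow> complex \<Rightarrow> real \<Rightarrow> complex set" where
  "ellipse_region a b L = {w. cmod (w - a) + cmod (w - b) \<le> L}"

definition ellipse_minor_axis :: "complex \<Rightarrow> complex \<Rightarrow> real \<Rightarrow> real" where
  "ellipse_minor_axis a b L = sqrt (L\<^sup>2 - (cmod (a - b))\<^sup>2)"

end

theory Submission
  imports Defs
begin

(* Test the operator on the functions f = x + y z^N.  Because dA_alpha is rotation invariant, an integral of
   psi(z) conj(z)^m |z|^(2k) can first be averaged over circles, where Cauchy's formula picks out the
   Taylor coefficient psi_m; what remains is a radial Beta integral, the moment c_(m+k) = ||z^(m+k)||^2.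
   Hence ||f||^2 = |x|^2 + c_N |y|^2 and
     <C f, f> = |x|^2 a + c_N x conj(y) psi_N + c_N |y|^2 b,   a = psi(0), b = lambda^N psi(0).
   With Y = sqrt(c_N) y these are the values <T v, v>, |v| = 1, of the 2x2 matrix
   T = [[a, sqrt(c_N) psi_N], [0, b]], which fill the ellipse with foci a, b and minor axis
   sqrt(c_N) |psi_N| (elliptical range theorem).  Rotation invariance of Lebesgue measure on C comes
   from writing a rotation as a product of three shears. *)

section \<open>Rotation invariance of Lebesgue measure on \<complex>\<close>

lemma lborel_complex_eq_distr_pair:
  "distr (lborel \<Otimes>\<^sub>M lborel) borel (\<lambda>(x, y). Complex x y) = (lborel :: complex measure)"
proof (rule lborel_eqI[symmetric])
  have m: "(\<lambda>(x, y). Complex x y) \<in> borel_measurable (lborel \<Otimes>\<^sub>M (lborel :: real measure))"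
    by (simp add: Complex_eq case_prod_beta)
  fix l u :: complex
  assume le: "\<And>b. b \<in> Basis \<Longrightarrow> l \<bullet> b \<le> u \<bullet> b"
  then have "Re l \<le> Re u" "Im l \<le> Im u"
    using le[of 1] le[of \<i>] by (auto simp: Basis_complex_def)
  moreover have "(\<lambda>(x, y). Complex x y) -` box l u \<inter> space (lborel \<Otimes>\<^sub>M lborel)
      = {Re l<..<Re u} \<times> {Im l<..<Im u}"
    by (auto simp: box_def Basis_complex_def space_pair_measure inner_complex_def)
  ultimately show "emeasure (distr (lborel \<Otimes>\<^sub>M lborel) borel (\<lambda>(x, y). Complex x y)) (box l u)
      = (\<Prod>b\<in>Basis. (u - l) \<bullet> b)"
    by (simp add: emeasure_distr[OF m] lborel.emeasure_pair_measure_Times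
        Basis_complex_def inner_complex_def ennreal_mult)
qed simp

lemma nn_integral_lborel_complex:
  fixes f :: "complex \<Rightarrow> ennreal"
  assumes [measurable]: "f \<in> borel_measurable borel"
  shows "(\<integral>\<^sup>+ z. f z \<partial>lborel) = (\<integral>\<^sup>+ x. \<integral>\<^sup>+ y. f (Complex x y) \<partial>lborel \<partial>lborel)"
    and "(\<integral>\<^sup>+ z. f z \<partial>lborel) = (\<integral>\<^sup>+ y. \<integral>\<^sup>+ x. f (Complex x y) \<partial>lborel \<partial>lborel)"
proof -
  have m: "(\<lambda>(x, y). Complex x y) \<in> measurable (lborel \<Otimes>\<^sub>M (lborel :: real measure)) borel"
    by (simp add: Complex_eq case_prod_beta)
  have mf: "(\<lambda>w. f (Complex (fst w) (snd w))) \<in> borel_measurable (lborel \<Otimes>\<^sub>M lborel)"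
    by (simp add: Complex_eq)
  have pair: "(\<integral>\<^sup>+ z. f z \<partial>lborel) = (\<integral>\<^sup>+ w. f (Complex (fst w) (snd w)) \<partial>(lborel \<Otimes>\<^sub>M lborel))"
    by (subst lborel_complex_eq_distr_pair[symmetric], subst nn_integral_distr[OF m])
      (simp_all add: case_prod_beta)
  show "(\<integral>\<^sup>+ z. f z \<partial>lborel) = (\<integral>\<^sup>+ x. \<integral>\<^sup>+ y. f (Complex x y) \<partial>lborel \<partial>lborel)"
    using pair lborel.nn_integral_fst[OF mf] by simp
  show "(\<integral>\<^sup>+ z. f z \<partial>lborel) = (\<integral>\<^sup>+ y. \<integral>\<^sup>+ x. f (Complex x y) \<partial>lborel \<partial>lborel)"
    using pair lborel_pair.nn_integral_snd[OF mf] by simp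
qed

lemma nn_integral_lborel_shear_Re:
  fixes f :: "complex \<Rightarrow> ennreal"
  assumes [measurable]: "f \<in> borel_measurable borel"
  shows "(\<integral>\<^sup>+ z. f (z + of_real (a * Im z)) \<partial>lborel) = (\<integral>\<^sup>+ z. f z \<partial>lborel)"
proof -
  have "(\<integral>\<^sup>+ z. f (z + of_real (a * Im z)) \<partial>lborel)
      = (\<integral>\<^sup>+ y. \<integral>\<^sup>+ x. f (Complex (x + a * y) y) \<partial>lborel \<partial>lborel)"
    by (subst nn_integral_lborel_complex(2)) (simp_all add: Complex_eq algebra_simps)
  also have "\<dots> = (\<integral>\<^sup>+ y. \<integral>\<^sup>+ x. f (Complex x y) \<partial>lborel \<partial>lborel)"
  proof (rule nn_integral_cong)
    fix y
    show "(\<integral>\<^sup>+ x. f (Complex (x + a * y) y) \<partial>lborel) = (\<integral>\<^sup>+ x. f (Complex x y) \<partial>lborel)"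
      using nn_integral_real_affine[of "\<lambda>x. f (Complex x y)" 1 "a * y"]
      by (simp add: add.commute Complex_eq)
  qed
  finally show ?thesis
    by (simp add: nn_integral_lborel_complex(2))
qed

lemma nn_integral_lborel_shear_Im:
  fixes f :: "complex \<Rightarrow> ennreal"
  assumes [measurable]: "f \<in> borel_measurable borel"
  shows "(\<integral>\<^sup>+ z. f (z + \<i> * of_real (b * Re z)) \<partial>lborel) = (\<integral>\<^sup>+ z. f z \<partial>lborel)"
proof -
  have "(\<integral>\<^sup>+ z. f (z + \<i> * of_real (b * Re z)) \<partial>lborel)
      = (\<integral>\<^sup>+ x. \<integral>\<^sup>+ y. f (Complex x (y + b * x)) \<partial>lborel \<partial>lborel)"
    by (subst nn_integral_lborel_complex(1)) (simp_all add: Complex_eq algebra_simps)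
  also have "\<dots> = (\<integral>\<^sup>+ x. \<integral>\<^sup>+ y. f (Complex x y) \<partial>lborel \<partial>lborel)"
  proof (rule nn_integral_cong)
    fix x
    show "(\<integral>\<^sup>+ y. f (Complex x (y + b * x)) \<partial>lborel) = (\<integral>\<^sup>+ y. f (Complex x y) \<partial>lborel)"
      using nn_integral_real_affine[of "\<lambda>y. f (Complex x y)" 1 "b * x"]
      by (simp add: add.commute Complex_eq)
  qed
  finally show ?thesis
    by (simp add: nn_integral_lborel_complex(1))
qed

text \<open>Paeth's decomposition: for \<open>\<omega> = e\<^sup>i\<^sup>\<theta>\<close> we have \<open>t = tan (\<theta>/2)\<close>.\<close>

lemma rotation_eq_three_shears:
  fixes \<omega> z :: complex
  assumes "cmod \<omega> = 1" "\<omega> \<noteq> -1"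
  defines "t \<equiv> Im \<omega> / (1 + Re \<omega>)"
  defines "S \<equiv> \<lambda>z. z + of_real (- t * Im z)" and "T \<equiv> \<lambda>z. z + \<i> * of_real (Im \<omega> * Re z)"
  shows "\<omega> * z = S (T (S z))"
proof -
  have sq: "(Im \<omega>)\<^sup>2 = (1 - Re \<omega>) * (1 + Re \<omega>)"
    using assms(1) by (simp add: cmod_def algebra_simps power2_eq_square)
  have "1 + Re \<omega> \<noteq> 0"
  proof
    assume "1 + Re \<omega> = 0"
    with sq have "\<omega> = -1" by (simp add: complex_eq_iff)
    with assms(2) show False ..
  qed
  then have "t * (1 + Re \<omega>) = Im \<omega>" "Im \<omega> * t = 1 - Re \<omega>"
    using sq by (simp_all add: t_def field_simps power2_eq_square)
  moreover have
    "Re z - t * Im z - t * (Im z + Im \<omega> * (Re z - t * Im z))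
       = Re z * (1 - Im \<omega> * t) - Im z * (t * (1 + Re \<omega>)) - Im z * t * (1 - Re \<omega> - Im \<omega> * t)"
    "Im z + Im \<omega> * (Re z - t * Im z) = Im \<omega> * Re z + Im z * (1 - Im \<omega> * t)"
    by (simp_all add: algebra_simps)
  ultimately show ?thesis
    by (simp add: S_def T_def complex_eq_iff)
qed

lemma nn_integral_lborel_rotate:
  fixes f :: "complex \<Rightarrow> ennreal" and \<omega> :: complex
  assumes "f \<in> borel_measurable borel" and "cmod \<omega> = 1"
  shows "(\<integral>\<^sup>+ z. f (\<omega> * z) \<partial>lborel) = (\<integral>\<^sup>+ z. f z \<partial>lborel)"
proof -
  have rotate: "(\<integral>\<^sup>+ z. g (\<omega> * z) \<partial>lborel) = (\<integral>\<^sup>+ z. g z \<partial>lborel)"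
    if [measurable]: "g \<in> borel_measurable borel" and "cmod \<omega> = 1" "\<omega> \<noteq> -1"
    for g :: "complex \<Rightarrow> ennreal" and \<omega> :: complex
  proof -
    define t where "t = Im \<omega> / (1 + Re \<omega>)"
    define S where "S = (\<lambda>z. z + of_real (- t * Im z))"
    define T where "T = (\<lambda>z. z + \<i> * of_real (Im \<omega> * Re z))"
    have [measurable]: "S \<in> borel_measurable borel" "T \<in> borel_measurable borel"
      by (simp_all add: S_def T_def)
    have "(\<integral>\<^sup>+ z. g (\<omega> * z) \<partial>lborel) = (\<integral>\<^sup>+ z. g (S (T (S z))) \<partial>lborel)"
      using rotation_eq_three_shears[OF that(2,3)] by (simp add: t_def S_def T_def)
    also have "\<dots> = (\<integral>\<^sup>+ z. g (S (T z)) \<partial>lborel)"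
      using nn_integral_lborel_shear_Re[of "\<lambda>z. g (S (T z))" "- t"] by (simp add: S_def)
    also have "\<dots> = (\<integral>\<^sup>+ z. g (S z) \<partial>lborel)"
      using nn_integral_lborel_shear_Im[of "\<lambda>z. g (S z)" "Im \<omega>"] by (simp add: T_def)
    also have "\<dots> = (\<integral>\<^sup>+ z. g z \<partial>lborel)"
      using nn_integral_lborel_shear_Re[of g "- t"] by (simp add: S_def)
    finally show ?thesis .
  qed
  show ?thesis
  proof (cases "\<omega> = -1")
    case True
    have "(\<lambda>z. f (\<i> * z)) \<in> borel_measurable borel"
      using assms(1) by measurable
    then show ?thesis
      unfolding True using rotate[of "\<lambda>z. f (\<i> * z)" \<i>] rotate[of f \<i>] assms(1)
      by (simp add: complex_eq_iff)
  qed (use assms rotate in blast)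
qed

section \<open>The weighted area measure\<close>

lemma emeasure_unit_disc_norm_sq_greater:
  "emeasure lborel (ball (0::complex) 1 \<inter> {z. x < (cmod z)\<^sup>2}) = ennreal (pi * (1 - min 1 (max 0 x)))"
proof -
  consider "x < 0" | "0 \<le> x" "x < 1" | "1 \<le> x" by linarith
  then show ?thesis
  proof cases
    case 1
    then have "ball (0::complex) 1 \<inter> {z. x < (cmod z)\<^sup>2} = ball 0 1"
      by (auto intro: less_le_trans[OF _ zero_le_power2])
    with 1 show ?thesis
      by (simp add: emeasure_ball unit_ball_vol_2)
  next
    case 2
    have "cmod z \<le> sqrt x \<longleftrightarrow> (cmod z)\<^sup>2 \<le> x" for z :: complex
      by (metis norm_ge_zero real_sqrt_abs real_sqrt_le_iff abs_of_nonneg)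
    then have "ball (0::complex) 1 \<inter> {z. x < (cmod z)\<^sup>2} = ball 0 1 - cball 0 (sqrt x)"
      by auto
    moreover have "cball (0::complex) (sqrt x) \<subseteq> ball 0 1"
    proof
      fix z :: complex
      assume "z \<in> cball 0 (sqrt x)"
      then have "cmod z \<le> sqrt x"
        by simp
      also have "sqrt x < 1"
        using 2 by simp
      finally show "z \<in> ball 0 1"
        by simp
    qed
    ultimately show ?thesis
      using 2 by (simp add: emeasure_Diff emeasure_ball emeasure_cball unit_ball_vol_2
          ennreal_minus[symmetric] algebra_simps)
  next
    case 3
    have "(cmod z)\<^sup>2 < 1" if "cmod z < 1" for z :: complex
      using that by (simp add: abs_square_less_1)
    with 3 have "ball (0::complex) 1 \<inter> {z. x < (cmod z)\<^sup>2} = {}"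
      by force
    with 3 show ?thesis
      by simp
  qed
qed

lemma distr_unit_disc_norm_sq:
  "distr (density lborel (indicator (ball (0::complex) 1))) borel (\<lambda>z. (cmod z)\<^sup>2)
     = density lborel (\<lambda>t. ennreal pi * indicator {0<..<1} t)"
  (is "?M = ?N")
proof (rule measure_eqI_lessThan)
  fix x :: real
  have "emeasure ?M {x<..} = emeasure lborel (ball 0 1 \<inter> {z::complex. x < (cmod z)\<^sup>2})"
  proof -
    have "open {z::complex. x < (cmod z)\<^sup>2}"
      by (intro open_Collect_less) (auto intro!: continuous_intros)
    then show ?thesis
      by (simp add: emeasure_distr vimage_def emeasure_restricted Int_commute)
  qed
  also have "\<dots> = ennreal (pi * (1 - min 1 (max 0 x)))"
    by (rule emeasure_unit_disc_norm_sq_greater)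
  finally have M: "emeasure ?M {x<..} = ennreal (pi * (1 - min 1 (max 0 x)))" .
  have "emeasure ?N {x<..} = (\<integral>\<^sup>+ t. ennreal pi * indicator ({0<..<1} \<inter> {x<..}) t \<partial>lborel)"
    by (subst emeasure_density) (auto intro!: nn_integral_cong simp: indicator_def)
  also have "\<dots> = ennreal pi * emeasure lborel ({0<..<1} \<inter> {x<..})"
    by (subst nn_integral_cmult_indicator) auto
  also have "{0<..<1} \<inter> {x<..} = {max 0 x<..<1::real}"
    by auto
  also have "ennreal pi * emeasure lborel {max 0 x<..<1::real} = ennreal (pi * (1 - min 1 (max 0 x)))"
    by (auto simp: ennreal_mult[symmetric] max_def min_def)
  finally show "emeasure ?M {x<..} = emeasure ?N {x<..}"
    using M by simp
  show "emeasure ?M {x<..} < \<infinity>"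
    using M by simp
qed simp_all

lemma nn_integral_unit_disc_radial:
  assumes [measurable]: "g \<in> borel_measurable borel"
  shows "(\<integral>\<^sup>+ z. indicator (ball (0::complex) 1) z * g ((cmod z)\<^sup>2) \<partial>lborel)
       = ennreal pi * (\<integral>\<^sup>+ t. indicator {0<..<1} t * g t \<partial>lborel)"
proof -
  have "(\<integral>\<^sup>+ z. indicator (ball (0::complex) 1) z * g ((cmod z)\<^sup>2) \<partial>lborel)
      = (\<integral>\<^sup>+ z. g ((cmod z)\<^sup>2) \<partial>density lborel (indicator (ball (0::complex) 1)))"
    by (subst nn_integral_density) (auto intro: borel_measurable_indicator)
  also have "\<dots> = (\<integral>\<^sup>+ t. g t \<partial>density lborel (\<lambda>t. ennreal pi * indicator {0<..<1} t))"
    by (simp add: nn_integral_distr distr_unit_disc_norm_sq[symmetric])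
  also have "\<dots> = ennreal pi * (\<integral>\<^sup>+ t. indicator {0<..<1} t * g t \<partial>lborel)"
    by (simp add: nn_integral_density nn_integral_cmult mult.assoc)
  finally show ?thesis .
qed

definition bergman_weight :: "real \<Rightarrow> complex \<Rightarrow> ennreal" where
  "bergman_weight \<alpha> z = indicator (ball 0 1) z * ennreal ((\<alpha> + 1) / pi * (1 - (cmod z)\<^sup>2) powr \<alpha>)"

lemma dA_eq_density: "dA \<alpha> = density lborel (bergman_weight \<alpha>)"
  unfolding dA_def bergman_weight_def[abs_def] ..

lemma borel_measurable_bergman_weight [measurable]: "bergman_weight \<alpha> \<in> borel_measurable borel"
proof -
  have [measurable]: "Measurable.pred borel (\<lambda>z::complex. z \<in> ball 0 1)"
    by (simp add: pred_def)
  show ?thesis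
    unfolding bergman_weight_def[abs_def] by measurable
qed

lemma bergman_weight_rotate: "cmod \<omega> = 1 \<Longrightarrow> bergman_weight \<alpha> (\<omega> * z) = bergman_weight \<alpha> z"
  by (simp add: bergman_weight_def norm_mult indicator_def)

lemma sets_dA [simp, measurable_cong]: "sets (dA \<alpha>) = sets borel"
  by (simp add: dA_eq_density)

lemma space_dA [simp]: "space (dA \<alpha>) = UNIV"
  by (simp add: dA_eq_density)

lemma AE_dA_in_unit_disc: "AE z in dA \<alpha>. z \<in> ball 0 1"
  unfolding dA_eq_density by (subst AE_density) (auto simp: bergman_weight_def indicator_def)

lemma distr_dA_rotate:
  assumes "cmod \<omega> = 1"
  shows "distr (dA \<alpha>) borel (\<lambda>z. \<omega> * z) = dA \<alpha>"
proof (rule measure_eqI)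
  fix A :: "complex set"
  assume "A \<in> sets (distr (dA \<alpha>) borel (\<lambda>z. \<omega> * z))"
  then have [measurable]: "A \<in> sets borel"
    by simp
  have "(\<lambda>z. \<omega> * z) -` A \<in> sets borel"
    using measurable_sets[of "\<lambda>z. \<omega> * z" borel borel A] by simp
  have "emeasure (distr (dA \<alpha>) borel (\<lambda>z. \<omega> * z)) A
      = (\<integral>\<^sup>+ z. (\<lambda>z. bergman_weight \<alpha> z * indicator A z) (\<omega> * z) \<partial>lborel)"
    using assms \<open>(\<lambda>z. \<omega> * z) -` A \<in> sets borel\<close>
    by (simp add: emeasure_distr dA_eq_density emeasure_density bergman_weight_rotate
        indicator_vimage[symmetric])
  also have "\<dots> = emeasure (dA \<alpha>) A"
    using assms nn_integral_lborel_rotate[of "\<lambda>z. bergman_weight \<alpha> z * indicator A z" \<omega>]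
    by (simp add: dA_eq_density emeasure_density)
  finally show "emeasure (distr (dA \<alpha>) borel (\<lambda>z. \<omega> * z)) A = emeasure (dA \<alpha>) A" .
qed simp

text \<open>The squared norm of \<open>z\<^sup>K\<close> in \<open>L\<^sup>2\<^sub>a(dA\<^sub>\<alpha>)\<close>.\<close>

definition bergman_moment :: "real \<Rightarrow> nat \<Rightarrow> real" where
  "bergman_moment \<alpha> K = fact K * Gamma (\<alpha> + 2) / Gamma (real K + \<alpha> + 2)"

lemma bergman_moment_pos: "\<alpha> > -1 \<Longrightarrow> bergman_moment \<alpha> K > 0"
  unfolding bergman_moment_def by (intro divide_pos_pos mult_pos_pos Gamma_real_pos) auto

lemma bergman_moment_0:
  assumes "\<alpha> > -1"
  shows "bergman_moment \<alpha> 0 = 1"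
proof -
  have "Gamma (\<alpha> + 2) > 0"
    using assms by (intro Gamma_real_pos) simp
  then show ?thesis
    by (simp add: bergman_moment_def)
qed

lemma has_integral_bergman_moment:
  assumes "\<alpha> > -1"
  shows "((\<lambda>t. (\<alpha> + 1) * ((1 - t) powr \<alpha> * t ^ K)) has_integral bergman_moment \<alpha> K) {0<..<1}"
proof -
  have "((\<lambda>t. t powr (real K + 1 - 1) * (1 - t) powr (\<alpha> + 1 - 1)) has_integral Beta (real K + 1) (\<alpha> + 1)) {0<..<1}"
    using has_integral_Beta_real[of "real K + 1" "\<alpha> + 1"] assms by (simp add: has_integral_Icc_iff_Ioo)
  then have "((\<lambda>t. (\<alpha> + 1) * ((1 - t) powr \<alpha> * t ^ K)) has_integral (\<alpha> + 1) * Beta (real K + 1) (\<alpha> + 1)) {0<..<1}"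
    by (intro has_integral_mult_right) (auto elim: has_integral_cong[THEN iffD1, rotated] simp: powr_realpow)
  moreover have "(\<alpha> + 1) * Beta (real K + 1) (\<alpha> + 1) = bergman_moment \<alpha> K"
  proof -
    have "\<alpha> + 1 \<notin> \<int>\<^sub>\<le>\<^sub>0"
      using assms by (auto elim!: nonpos_Ints_cases)
    then have "Gamma (\<alpha> + 2) = (\<alpha> + 1) * Gamma (\<alpha> + 1)"
      using Gamma_plus1[of "\<alpha> + 1"] by (simp add: add.assoc)
    moreover have "Gamma (real K + 1) = fact K"
      using Gamma_fact[of K] by (simp add: add.commute)
    ultimately show ?thesis
      by (simp add: Beta_def bergman_moment_def add_ac)
  qed
  ultimately show ?thesis
    by simp
qed

lemma nn_integral_dA_norm_power:
  assumes "\<alpha> > -1"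
  shows "(\<integral>\<^sup>+ z. ennreal ((cmod z) ^ (2 * K)) \<partial>dA \<alpha>) = ennreal (bergman_moment \<alpha> K)"
proof -
  define g where "g t = ennreal ((\<alpha> + 1) / pi * (1 - t) powr \<alpha> * t ^ K)" for t :: real
  have [measurable]: "g \<in> borel_measurable borel"
    unfolding g_def by measurable
  have "bergman_weight \<alpha> z * ennreal ((cmod z) ^ (2 * K)) = indicator (ball 0 1) z * g ((cmod z)\<^sup>2)"
    for z :: complex
    using assms by (simp add: bergman_weight_def g_def indicator_def ennreal_mult[symmetric] power_mult)
  then have "(\<integral>\<^sup>+ z. ennreal ((cmod z) ^ (2 * K)) \<partial>dA \<alpha>)
      = (\<integral>\<^sup>+ z. indicator (ball (0::complex) 1) z * g ((cmod z)\<^sup>2) \<partial>lborel)"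
    by (simp add: dA_eq_density nn_integral_density)
  also have "\<dots> = ennreal pi * (\<integral>\<^sup>+ t. indicator {0<..<1} t * g t \<partial>lborel)"
    by (rule nn_integral_unit_disc_radial) simp
  also have "\<dots> = (\<integral>\<^sup>+ t. ennreal ((\<alpha> + 1) * ((1 - t) powr \<alpha> * t ^ K)) * indicator {0<..<1} t \<partial>lborel)"
    using assms by (auto simp: nn_integral_cmult[symmetric] g_def indicator_def ennreal_mult''[symmetric]
        intro!: nn_integral_cong)
  also have "\<dots> = ennreal (bergman_moment \<alpha> K)"
    using assms by (intro nn_integral_has_integral_lebesgue' has_integral_bergman_moment) auto
  finally show ?thesis .
qed

lemma has_bochner_integral_dA_norm_power:
  "\<alpha> > -1 \<Longrightarrow> has_bochner_integral (dA \<alpha>) (\<lambda>z. (cmod z) ^ (2 * K)) (bergman_moment \<alpha> K)"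
  by (rule has_bochner_integral_nn_integral)
    (auto simp: nn_integral_dA_norm_power less_imp_le[OF bergman_moment_pos])

lemma emeasure_dA_UNIV: "\<alpha> > -1 \<Longrightarrow> emeasure (dA \<alpha>) UNIV = 1"
  using nn_integral_dA_norm_power[of \<alpha> 0] by (simp add: bergman_moment_0)

lemma finite_measure_dA: "\<alpha> > -1 \<Longrightarrow> finite_measure (dA \<alpha>)"
  by (intro finite_measureI) (simp add: emeasure_dA_UNIV)

lemma square_integrable_imp_integrable:
  fixes f :: "'a \<Rightarrow> 'b::{banach, second_countable_topology}"
  assumes "finite_measure M" and f: "f \<in> borel_measurable M"
    and "(\<integral>\<^sup>+ x. ennreal ((norm (f x))\<^sup>2) \<partial>M) < \<infinity>"
  shows "integrable M f"
proof (rule Bochner_Integration.integrable_bound)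
  interpret finite_measure M
    by (fact assms(1))
  have "integrable M (\<lambda>x. (norm (f x))\<^sup>2)"
    using assms by (intro integrableI_nonneg) auto
  then show "integrable M (\<lambda>x. 1 + (norm (f x))\<^sup>2)"
    by simp
  show "AE x in M. norm (f x) \<le> norm (1 + (norm (f x))\<^sup>2)"
  proof (intro AE_I2)
    fix x
    have "1 + (norm (f x))\<^sup>2 - norm (f x) = (norm (f x) - 1)\<^sup>2 + norm (f x)"
      by (simp add: power2_eq_square algebra_simps)
    then have "norm (f x) \<le> 1 + (norm (f x))\<^sup>2"
      using zero_le_power2[of "norm (f x) - 1"] norm_ge_zero[of "f x"] by linarith
    then show "norm (f x) \<le> norm (1 + (norm (f x))\<^sup>2)"
      by simp
  qed
qed (use f in simp)

text \<open>A function holomorphic on the disc need not be Borel measurable on \<complex>; cut off outside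
  the disc, it is.\<close>

definition disc_restrict :: "(complex \<Rightarrow> complex) \<Rightarrow> complex \<Rightarrow> complex" where
  "disc_restrict q z = (if z \<in> ball 0 1 then q z else 0)"

lemma borel_measurable_disc_restrict:
  assumes "continuous_on (ball 0 1) q"
  shows "disc_restrict q \<in> borel_measurable borel"
proof -
  have "(\<lambda>z. indicator (ball 0 1) z *\<^sub>R q z) \<in> borel_measurable borel"
    using assms by (intro borel_measurable_continuous_on_indicator) simp_all
  moreover have "(\<lambda>z. indicator (ball 0 1) z *\<^sub>R q z) = disc_restrict q"
    by (auto simp: disc_restrict_def fun_eq_iff)
  ultimately show ?thesis
    by simp
qed

lemma integrable_disc_restrict_mult:
  assumes "integrable M (disc_restrict q)" and "h \<in> borel_measurable M"
    and "\<And>z. z \<in> ball 0 1 \<Longrightarrow> cmod (h z) \<le> 1"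
  shows "integrable M (\<lambda>z. disc_restrict q z * h z)"
proof (rule Bochner_Integration.integrable_bound[OF assms(1)])
  show "(\<lambda>z. disc_restrict q z * h z) \<in> borel_measurable M"
    using borel_measurable_integrable[OF assms(1)] assms(2) by simp
  show "AE z in M. norm (disc_restrict q z * h z) \<le> norm (disc_restrict q z)"
    using assms(3) by (intro AE_I2) (simp add: disc_restrict_def norm_mult mult_left_le)
qed

lemma integrable_dA_disc_restrict:
  assumes "\<alpha> > -1" and "continuous_on (ball 0 1) q" and "disc_restrict q \<in> bergman \<alpha>"
  shows "integrable (dA \<alpha>) (disc_restrict q)"
proof (rule square_integrable_imp_integrable)
  show "disc_restrict q \<in> borel_measurable (dA \<alpha>)"
    using borel_measurable_disc_restrict[OF assms(2)] by simp
qed (use assms finite_measure_dA in \<open>simp_all add: bergman_def\<close>)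

lemma bounded_holomorphic_disc_restrict_in_bergman:
  assumes "\<alpha> > -1" and q: "q holomorphic_on ball 0 1" and "bounded (q ` ball 0 1)"
  shows "disc_restrict q \<in> bergman \<alpha>"
  unfolding bergman_def
proof (intro CollectI conjI)
  show "disc_restrict q holomorphic_on ball 0 1"
    using q by (rule holomorphic_transform) (simp add: disc_restrict_def)
  obtain B where B: "\<And>z. z \<in> ball 0 1 \<Longrightarrow> cmod (q z) \<le> B"
    using assms(3) unfolding bounded_iff by blast
  have "(cmod (disc_restrict q z))\<^sup>2 \<le> B\<^sup>2" for z
  proof (cases "z \<in> ball 0 1")
    case True
    then show ?thesis
      using B[OF True] by (simp add: disc_restrict_def power_mono)
  qed (simp add: disc_restrict_def)
  then have "(\<integral>\<^sup>+ z. ennreal ((cmod (disc_restrict q z))\<^sup>2) \<partial>dA \<alpha>) \<le> (\<integral>\<^sup>+ z. ennreal (B\<^sup>2) \<partial>dA \<alpha>)"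
    by (intro nn_integral_mono ennreal_leI)
  also have "\<dots> = ennreal (B\<^sup>2)"
    using emeasure_dA_UNIV[OF assms(1)] by simp
  also have "\<dots> < \<infinity>"
    by simp
  finally show "(\<integral>\<^sup>+ z. ennreal ((cmod (disc_restrict q z))\<^sup>2) \<partial>dA \<alpha>) < \<infinity>" .
qed

lemma disc_restrict_in_bergman_if_bounded_wcomp_rotation:
  assumes a: "\<alpha> > -1" and \<mu>: "cmod \<mu> = 1"
    and bounded: "bounded_on_bergman \<alpha> (wcomp \<psi> (\<lambda>z. \<mu> * z))"
  shows "disc_restrict \<psi> \<in> bergman \<alpha>"
proof -
  have "disc_restrict (\<lambda>_. 1) \<in> bergman \<alpha>"
    using a by (intro bounded_holomorphic_disc_restrict_in_bergman) (auto simp: image_constant_conv)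
  then have "wcomp \<psi> (\<lambda>z. \<mu> * z) (disc_restrict (\<lambda>_. 1)) \<in> bergman \<alpha>"
    using bounded by (simp add: bounded_on_bergman_def)
  moreover have "wcomp \<psi> (\<lambda>z. \<mu> * z) (disc_restrict (\<lambda>_. 1)) = disc_restrict \<psi>"
    using \<mu> by (simp add: wcomp_def disc_restrict_def norm_mult fun_eq_iff)
  ultimately show ?thesis
    by simp
qed

section \<open>Integrals against monomials via averaging over rotations\<close>

lemma integral_rotation_average:
  fixes F :: "complex \<Rightarrow> 'b::{banach, second_countable_topology}"
  assumes "sigma_finite_measure M" and sets_M: "sets M = sets borel"
    and rotate: "\<And>\<omega>. cmod \<omega> = 1 \<Longrightarrow> distr M borel (\<lambda>z. \<omega> * z) = M"
    and F: "integrable M F"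
  shows "(\<integral> z. F z \<partial>M) = (\<integral> z. (LINT s:{0..1}|lborel. F (cis (2 * pi * s) * z)) \<partial>M)"
proof -
  interpret pair_sigma_finite lborel M
    using assms(1) by (simp add: pair_sigma_finite_def lborel.sigma_finite_measure_axioms)
  have [measurable]: "F \<in> borel_measurable borel"
    using borel_measurable_integrable[OF F] by (simp add: measurable_cong_sets[OF sets_M refl])
  have [measurable_cong]: "sets M = sets borel"
    by (fact sets_M)
  have mult: "(\<lambda>z. \<omega> * z) \<in> measurable M borel" for \<omega> :: complex
    by simp
  have integral_rotate: "(\<integral> z. G (cis t * z) \<partial>M) = (\<integral> z. G z \<partial>M)"
    and integrable_rotate: "integrable M (\<lambda>z. G (cis t * z)) \<longleftrightarrow> integrable M G"
    if [measurable]: "G \<in> borel_measurable borel" for G :: "complex \<Rightarrow> 'c::{banach, second_countable_topology}" and t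
    using integral_distr[OF mult, of G "cis t"] integrable_distr_eq[OF mult, of G "cis t"]
    by (simp_all add: rotate)
  have F_rotate: "(\<integral> z. F (cis t * z) \<partial>M) = (\<integral> z. F z \<partial>M)"
    and norm_F_rotate: "(\<integral> z. norm (F (cis t * z)) \<partial>M) = (\<integral> z. norm (F z) \<partial>M)"
    and integrable_F_rotate: "integrable M (\<lambda>z. F (cis t * z))" for t
    using integral_rotate[of F t] integral_rotate[of "\<lambda>z. norm (F z)" t] integrable_rotate[of F t] F
    by simp_all
  define H where "H = (\<lambda>s z. indicator {0..1::real} s *\<^sub>R F (cis (2 * pi * s) * z))"
  have "(\<lambda>w. cis (2 * pi * fst w) * snd w) \<in> borel_measurable (borel :: (real \<times> complex) measure)"
    by (intro borel_measurable_continuous_onI continuous_intros)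
  then have [measurable]: "(\<lambda>w. cis (2 * pi * fst w) * snd w) \<in> borel_measurable (lborel \<Otimes>\<^sub>M M)"
    by (simp add: measurable_cong_sets[OF sets_pair_measure_cong[OF sets_lborel sets_M] refl] borel_prod)
  have [measurable]: "case_prod H \<in> borel_measurable (lborel \<Otimes>\<^sub>M M)"
    unfolding H_def by measurable
  have "integrable (lborel \<Otimes>\<^sub>M M) (case_prod H)"
  proof (rule Fubini_integrable)
    show "integrable lborel (\<lambda>s. \<integral> z. norm (case_prod H (s, z)) \<partial>M)"
      by (simp add: H_def norm_F_rotate integrable_real_indicator)
    show "AE s in lborel. integrable M (\<lambda>z. case_prod H (s, z))"
      by (simp add: H_def integrable_F_rotate)
  qed simp
  then have "(\<integral> z. (\<integral> s. H s z \<partial>lborel) \<partial>M) = (\<integral> s. (\<integral> z. H s z \<partial>M) \<partial>lborel)"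
    by (rule Fubini_integral)
  also have "\<dots> = (\<integral> z. F z \<partial>M)"
    by (simp add: H_def F_rotate)
  finally show ?thesis
    by (simp add: H_def set_lebesgue_integral_def)
qed

lemma has_integral_circle_taylor_coeff:
  assumes q: "q holomorphic_on ball 0 R" and r: "0 < r" "r < R"
  shows "((\<lambda>s. q (of_real r * cis (2 * pi * s)) / cis (2 * pi * s) ^ m)
           has_integral of_real r ^ m * taylor_coeff q m) {0..1}"
proof -
  define K where "K = of_real r ^ m / (2 * pi * \<i>)"
  have "cball 0 r \<subseteq> ball 0 R"
    using r by auto
  then have "((\<lambda>u. q u / (u - 0) ^ Suc m) has_contour_integral (2 * pi * \<i>) / fact m * (deriv ^^ m) q 0)
      (circlepath 0 r)"
    using r by (intro Cauchy_has_contour_integral_higher_derivative_circlepath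
        holomorphic_on_subset[OF q] continuous_on_subset[OF holomorphic_on_imp_continuous_on[OF q]]) auto
  then have "((\<lambda>s. q (circlepath 0 r s) / (circlepath 0 r s) ^ Suc m
        * vector_derivative (circlepath 0 r) (at s within {0..1}))
      has_integral (2 * pi * \<i>) / fact m * (deriv ^^ m) q 0) {0..1}"
    by (simp add: has_contour_integral_def)
  then have "((\<lambda>s. K * (q (circlepath 0 r s) / (circlepath 0 r s) ^ Suc m
        * vector_derivative (circlepath 0 r) (at s within {0..1})))
      has_integral K * ((2 * pi * \<i>) / fact m * (deriv ^^ m) q 0)) {0..1}"
    by (rule has_integral_mult_right)
  also have "K * ((2 * pi * \<i>) / fact m * (deriv ^^ m) q 0) = of_real r ^ m * taylor_coeff q m"
    by (simp add: K_def taylor_coeff_def field_simps)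
  finally show ?thesis
  proof (rule has_integral_cong[THEN iffD1, rotated])
    fix s :: real
    assume "s \<in> {0..1}"
    then have "vector_derivative (circlepath 0 r) (at s within {0..1}) = 2 * pi * \<i> * of_real r * cis (2 * pi * s)"
      by (simp add: vector_derivative_circlepath01 cis_conv_exp mult_ac)
    moreover have "circlepath 0 r s = of_real r * cis (2 * pi * s)"
      by (simp add: circlepath cis_conv_exp mult_ac)
    ultimately show "K * (q (circlepath 0 r s) / (circlepath 0 r s) ^ Suc m
        * vector_derivative (circlepath 0 r) (at s within {0..1}))
      = q (of_real r * cis (2 * pi * s)) / cis (2 * pi * s) ^ m"
      using r by (simp add: K_def field_simps)
  qed
qed

lemma has_integral_circle_cnj_power:
  assumes q: "q holomorphic_on ball 0 R" and z: "cmod z < R"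
  shows "((\<lambda>s. q (cis (2 * pi * s) * z) * cnj (cis (2 * pi * s) * z) ^ m)
           has_integral of_real ((cmod z) ^ (2 * m)) * taylor_coeff q m) {0..1}"
proof (cases "z = 0")
  case True
  then show ?thesis
    using has_integral_const_real[of "q 0 * 0 ^ m" 0 1] by (cases m) (simp_all add: taylor_coeff_def)
next
  case False
  define r where "r = cmod z"
  define c where "c = z / of_real r"
  have r: "0 < r" "r < R"
    using False z by (simp_all add: r_def)
  have c: "cnj c * c = 1" and zc: "z = c * of_real r"
    using r complex_norm_square[of c] by (simp_all add: c_def r_def norm_divide mult.commute)
  have c_ball: "c * u \<in> ball 0 R" if "u \<in> ball 0 R" for u
    using that c by (simp add: c_def r_def norm_mult norm_divide)
  have "(\<lambda>u. q (c * u)) holomorphic_on ball 0 R"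
    using c_ball by (intro holomorphic_on_compose_gen[OF _ q, unfolded o_def] holomorphic_intros) auto
  from has_integral_mult_right[OF has_integral_circle_taylor_coeff[OF this r, of m], of "cnj c ^ m * of_real r ^ m"]
  have "((\<lambda>s. cnj c ^ m * of_real r ^ m * (q (c * (of_real r * cis (2 * pi * s))) / cis (2 * pi * s) ^ m))
      has_integral cnj c ^ m * of_real r ^ m * (of_real r ^ m * taylor_coeff (\<lambda>u. q (c * u)) m)) {0..1}" .
  also have "taylor_coeff (\<lambda>u. q (c * u)) m = c ^ m * taylor_coeff q m"
    using higher_deriv_compose_linear[OF q, of "ball 0 R" 0 c m] c_ball r by (simp add: taylor_coeff_def)
  also have "cnj c ^ m * of_real r ^ m * (of_real r ^ m * (c ^ m * taylor_coeff q m))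
      = (cnj c * c) ^ m * of_real (r ^ (2 * m)) * taylor_coeff q m"
    by (simp add: power_mult_distrib power_mult power2_eq_square mult_ac)
  also have "\<dots> = of_real ((cmod z) ^ (2 * m)) * taylor_coeff q m"
    using c by (simp add: r_def)
  finally show ?thesis
  proof (rule has_integral_cong[THEN iffD1, rotated])
    fix s :: real
    define e where "e = cis (2 * pi * s)"
    have "cnj e = inverse e"
      by (simp add: e_def cis_cnj)
    then show "cnj c ^ m * of_real r ^ m * (q (c * (of_real r * cis (2 * pi * s))) / cis (2 * pi * s) ^ m)
        = q (cis (2 * pi * s) * z) * cnj (cis (2 * pi * s) * z) ^ m"
      unfolding e_def[symmetric] by (simp add: zc power_mult_distrib power_inverse divide_inverse mult_ac)
  qed
qed

lemma set_integral_circle_disc_restrict_cnj_power: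
  fixes m k :: nat
  assumes q: "q holomorphic_on ball 0 1"
  defines "F \<equiv> \<lambda>z. disc_restrict q z * (cnj z ^ m * of_real ((cmod z) ^ (2 * k)))"
  shows "(LINT s:{0..1}|lborel. F (cis (2 * pi * s) * z))
       = taylor_coeff q m * of_real (indicator (ball 0 1) z * (cmod z) ^ (2 * (m + k)))"
proof (cases "z \<in> ball 0 1")
  case True
  define g where "g s = of_real ((cmod z) ^ (2 * k)) * (q (cis (2 * pi * s) * z) * cnj (cis (2 * pi * s) * z) ^ m)"
    for s
  have "F (cis (2 * pi * s) * z) = g s" for s
    using True by (simp add: F_def g_def disc_restrict_def norm_mult)
  moreover have "(g has_integral of_real ((cmod z) ^ (2 * k)) * (of_real ((cmod z) ^ (2 * m)) * taylor_coeff q m)) {0..1}"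
    unfolding g_def using True by (intro has_integral_mult_right has_integral_circle_cnj_power[OF q]) simp
  moreover have "continuous_on {0..1} g"
    unfolding g_def using True
    by (intro continuous_intros continuous_on_compose2[OF holomorphic_on_imp_continuous_on[OF q]])
      (auto simp: norm_mult)
  then have "set_integrable lborel {0..1} g"
    unfolding set_integrable_def by (intro borel_integrable_compact) simp_all
  ultimately show ?thesis
    using True by (simp add: set_borel_integral_eq_integral integral_unique power_add mult_ac)
qed (simp add: F_def disc_restrict_def norm_mult)

lemma integral_dA_disc_restrict_cnj_power:
  assumes a: "\<alpha> > -1" and q: "q holomorphic_on ball 0 1" and int: "integrable (dA \<alpha>) (disc_restrict q)"
  shows "(\<integral> z. disc_restrict q z * (cnj z ^ m * of_real ((cmod z) ^ (2 * k))) \<partial>dA \<alpha>)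
       = taylor_coeff q m * of_real (bergman_moment \<alpha> (m + k))"
proof -
  define F where "F z = disc_restrict q z * (cnj z ^ m * of_real ((cmod z) ^ (2 * k)))" for z
  have [measurable]: "Measurable.pred borel (\<lambda>z::complex. z \<in> ball 0 1)"
    by (simp add: pred_def)
  have "(\<lambda>z. cnj z ^ m * of_real ((cmod z) ^ (2 * k))) \<in> borel_measurable borel"
    by (intro borel_measurable_continuous_onI continuous_intros)
  moreover have "cmod z ^ m * cmod z ^ (2 * k) \<le> 1" if "cmod z < 1" for z
    using that by (intro mult_le_one power_le_one) auto
  ultimately have "integrable (dA \<alpha>) F"
    unfolding F_def using int by (intro integrable_disc_restrict_mult) (auto simp: norm_mult norm_power)
  then have "(\<integral> z. F z \<partial>dA \<alpha>) = (\<integral> z. (LINT s:{0..1}|lborel. F (cis (2 * pi * s) * z)) \<partial>dA \<alpha>)"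
    using finite_measure_dA[OF a] distr_dA_rotate
    by (intro integral_rotation_average) (auto intro: finite_measure.axioms(1))
  also have "\<dots> = (\<integral> z. taylor_coeff q m * of_real (indicator (ball 0 1) z * (cmod z) ^ (2 * (m + k))) \<partial>dA \<alpha>)"
    unfolding F_def by (intro Bochner_Integration.integral_cong refl set_integral_circle_disc_restrict_cnj_power[OF q])
  also have "\<dots> = (\<integral> z. taylor_coeff q m * of_real ((cmod z) ^ (2 * (m + k))) \<partial>dA \<alpha>)"
  proof (rule integral_cong_AE)
    show "AE z in dA \<alpha>. taylor_coeff q m * of_real (indicator (ball 0 1) z * (cmod z) ^ (2 * (m + k)))
        = taylor_coeff q m * of_real ((cmod z) ^ (2 * (m + k)))"
      using AE_dA_in_unit_disc by eventually_elim simp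
  qed measurable
  also have "\<dots> = taylor_coeff q m * of_real (bergman_moment \<alpha> (m + k))"
    using has_bochner_integral_dA_norm_power[OF a, of "m + k"]
    by (simp add: has_bochner_integral_iff integral_complex_of_real[symmetric] del: of_real_power)
  finally show ?thesis
    by (simp add: F_def)
qed

lemma integral_dA_disc_restrict_mult_power:
  assumes a: "\<alpha> > -1" and h: "h holomorphic_on ball 0 1" and int: "integrable (dA \<alpha>) (disc_restrict h)"
    and N: "N > 0"
  shows "integrable (dA \<alpha>) (\<lambda>z. disc_restrict h z * z ^ N)"
    and "(\<integral> z. disc_restrict h z * z ^ N \<partial>dA \<alpha>) = 0"
proof -
  have eq: "disc_restrict (\<lambda>z. h z * z ^ N) = (\<lambda>z. disc_restrict h z * z ^ N)"
    by (simp add: disc_restrict_def fun_eq_iff)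
  show integrable: "integrable (dA \<alpha>) (\<lambda>z. disc_restrict h z * z ^ N)"
    using int by (intro integrable_disc_restrict_mult) (auto simp: norm_power power_le_one)
  have "(\<lambda>z. h z * z ^ N) holomorphic_on ball 0 1"
    using h by (intro holomorphic_intros)
  from integral_dA_disc_restrict_cnj_power[OF a this, of 0 0] integrable
  show "(\<integral> z. disc_restrict h z * z ^ N \<partial>dA \<alpha>) = 0"
    using N a by (simp add: eq taylor_coeff_def bergman_moment_0)
qed

lemma integral_dA_binomial_form:
  fixes x y \<mu> :: complex
  assumes a: "\<alpha> > -1" and h: "h holomorphic_on ball 0 1" and int: "integrable (dA \<alpha>) (disc_restrict h)"
    and N: "N > 0" and \<mu>: "cmod \<mu> = 1"
  defines "f \<equiv> disc_restrict (\<lambda>z. x + y * z ^ N)"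
  shows "(\<integral> z. h z * f (\<mu> * z) * cnj (f z) \<partial>dA \<alpha>)
       = of_real ((cmod x)\<^sup>2) * h 0 + x * cnj y * taylor_coeff h N * of_real (bergman_moment \<alpha> N)
         + of_real ((cmod y)\<^sup>2) * \<mu> ^ N * h 0 * of_real (bergman_moment \<alpha> N)"
proof -
  define P where "P = disc_restrict h"
  define G where "G m k z = cnj z ^ m * of_real ((cmod z) ^ (2 * k))" for m k z
  have [measurable]: "G m k \<in> borel_measurable borel" for m k
    unfolding G_def[abs_def] by (intro borel_measurable_continuous_onI continuous_intros)
  have G_le_1: "cmod (G m k z) \<le> 1" if "z \<in> ball 0 1" for m k z
    using that by (auto simp: G_def norm_mult norm_power intro!: mult_le_one power_le_one)
  have integrable_PG: "integrable (dA \<alpha>) (\<lambda>z. P z * G m k z)" for m k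
    unfolding P_def using int G_le_1 by (intro integrable_disc_restrict_mult) simp_all
  have integral_PG: "(\<integral> z. P z * G m k z \<partial>dA \<alpha>) = taylor_coeff h m * of_real (bergman_moment \<alpha> (m + k))" for m k
    unfolding P_def G_def using integral_dA_disc_restrict_cnj_power[OF a h int] .
  have "h z * f (\<mu> * z) * cnj (f z)
      = of_real ((cmod x)\<^sup>2) * (P z * G 0 0 z) + x * cnj y * (P z * G N 0 z)
        + cnj x * y * \<mu> ^ N * (P z * z ^ N) + of_real ((cmod y)\<^sup>2) * \<mu> ^ N * (P z * G 0 N z)" for z
  proof (cases "z \<in> ball 0 1")
    case True
    then have "\<mu> * z \<in> ball 0 1"
      using \<mu> by (simp add: norm_mult)
    have "complex_of_real ((cmod z) ^ (2 * N)) = (complex_of_real ((cmod z)\<^sup>2)) ^ N"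
      by (simp add: power_mult)
    also have "\<dots> = z ^ N * cnj z ^ N"
      by (simp only: complex_norm_square power_mult_distrib)
    finally have "complex_of_real ((cmod z) ^ (2 * N)) = z ^ N * cnj z ^ N" .
    with True \<open>\<mu> * z \<in> ball 0 1\<close> show ?thesis
      by (simp add: f_def P_def G_def disc_restrict_def complex_norm_square
          power_mult_distrib algebra_simps del: of_real_power)
  qed (simp add: f_def P_def G_def disc_restrict_def)
  then show ?thesis
    using integrable_PG integral_dA_disc_restrict_mult_power[OF a h int N]
    by (simp add: P_def[symmetric] integral_PG bergman_moment_0[OF a] taylor_coeff_def)
qed

section \<open>The elliptical range of a 2\<times>2 matrix\<close>

lemma quadratic_nonpos_in_unit_interval:
  fixes A r1 r2 :: real
  assumes A: "A > 0" and r: "0 \<le> r1" "0 \<le> r2" "r1 + r2 \<le> sqrt A"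
  obtains s where "0 \<le> s" "s \<le> 1" "A * s\<^sup>2 - (r1\<^sup>2 - r2\<^sup>2 + A) * s + r1\<^sup>2 \<le> 0"
proof -
  define L where "L = sqrt A"
  define B where "B = r1\<^sup>2 - r2\<^sup>2 + A"
  have LA: "L\<^sup>2 = A" and L: "0 \<le> L"
    using A by (simp_all add: L_def)
  have "r2\<^sup>2 \<le> (L - r1)\<^sup>2" "r1\<^sup>2 \<le> (L - r2)\<^sup>2"
    using r by (auto simp: L_def intro!: power_mono)
  moreover have "B - 2 * L * r1 = (L - r1)\<^sup>2 - r2\<^sup>2" "2 * A - B - 2 * L * r2 = (L - r2)\<^sup>2 - r1\<^sup>2"
    unfolding B_def using LA by (simp_all add: power2_eq_square algebra_simps)
  moreover have "0 \<le> 2 * L * r1" "0 \<le> 2 * L * r2"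
    using L r by simp_all
  ultimately have B1: "2 * L * r1 \<le> B" and "0 \<le> B" "B \<le> 2 * A"
    by linarith+
  \<comment> \<open>the vertex of the parabola\<close>
  show ?thesis
  proof (rule that[of "B / (2 * A)"])
    show "0 \<le> B / (2 * A)" "B / (2 * A) \<le> 1"
      using A \<open>0 \<le> B\<close> \<open>B \<le> 2 * A\<close> by simp_all
    have "(2 * L * r1)\<^sup>2 \<le> B\<^sup>2"
      using B1 L r by (intro power_mono) auto
    then have "r1\<^sup>2 \<le> B\<^sup>2 / (4 * A)"
      using A LA by (simp add: pos_le_divide_eq power_mult_distrib mult.commute)
    moreover have "A * (B / (2 * A))\<^sup>2 - B * (B / (2 * A)) + r1\<^sup>2 = r1\<^sup>2 - B\<^sup>2 / (4 * A)"
      using A by (simp add: field_simps power2_eq_square)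
    ultimately show "A * (B / (2 * A))\<^sup>2 - (r1\<^sup>2 - r2\<^sup>2 + A) * (B / (2 * A)) + r1\<^sup>2 \<le> 0"
      unfolding B_def[symmetric] by linarith
  qed
qed

lemma ellipse_region_root:
  fixes u v :: complex and D :: real
  assumes D: "D > 0" and uv: "cmod u + cmod (u - v) \<le> sqrt ((cmod v)\<^sup>2 + D\<^sup>2)"
  obtains s where "0 \<le> s" "s \<le> 1" "(cmod (u - of_real s * v))\<^sup>2 = D\<^sup>2 * s * (1 - s)"
proof -
  define g where "g s = (cmod (u - of_real s * v))\<^sup>2 - D\<^sup>2 * s * (1 - s)" for s :: real
  have "g s = ((cmod v)\<^sup>2 + D\<^sup>2) * s\<^sup>2 - ((cmod u)\<^sup>2 - (cmod (u - v))\<^sup>2 + ((cmod v)\<^sup>2 + D\<^sup>2)) * s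
      + (cmod u)\<^sup>2" for s
    unfolding g_def cmod_power2 by (simp add: power2_eq_square algebra_simps)
  moreover obtain s0 where "0 \<le> s0" "s0 \<le> 1"
    "((cmod v)\<^sup>2 + D\<^sup>2) * s0\<^sup>2 - ((cmod u)\<^sup>2 - (cmod (u - v))\<^sup>2 + ((cmod v)\<^sup>2 + D\<^sup>2)) * s0
      + (cmod u)\<^sup>2 \<le> 0"
    using D uv by (rule_tac quadratic_nonpos_in_unit_interval) (auto intro: add_nonneg_pos)
  ultimately have "g s0 \<le> 0" "0 \<le> g 0" "continuous_on {0..s0} g"
    unfolding g_def by (auto intro!: continuous_intros)
  then obtain s where "0 \<le> s" "s \<le> s0" "g s = 0"
    using IVT2'[of g s0 0 0] \<open>0 \<le> s0\<close> by blast
  with \<open>s0 \<le> 1\<close> show ?thesis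
    by (intro that[of s]) (simp_all add: g_def)
qed

text \<open>One half of the elliptical range theorem: \<open>w = \<langle>T v, v\<rangle>\<close> for the matrix
  \<open>T = [[a, d], [0, b]]\<close> and the unit vector \<open>v = (x, Y)\<close>.\<close>

lemma ellipse_region_in_numerical_range_2x2:
  fixes a b d w :: complex
  assumes d: "d \<noteq> 0" and w: "w \<in> ellipse_region a b (sqrt ((cmod (a - b))\<^sup>2 + (cmod d)\<^sup>2))"
  obtains x Y where "(cmod x)\<^sup>2 + (cmod Y)\<^sup>2 = 1"
    and "w = of_real ((cmod x)\<^sup>2) * a + of_real ((cmod Y)\<^sup>2) * b + x * cnj Y * d"
proof -
  obtain s where s: "0 \<le> s" "s \<le> 1" and root: "(cmod (w - b - of_real s * (a - b)))\<^sup>2 = (cmod d)\<^sup>2 * s * (1 - s)"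
    using d w by (rule_tac ellipse_region_root[of "cmod d"]) (auto simp: ellipse_region_def norm_minus_commute)
  show ?thesis
  proof (cases "s = 0")
    case True
    then have "w = b"
      using root by simp
    then show ?thesis
      by (intro that[of 0 1]) simp_all
  next
    case False
    with s have "s > 0"
      by simp
    define x where "x = complex_of_real (sqrt s)"
    define Z where "Z = (w - b - of_real s * (a - b)) / (d * of_real (sqrt s))"
    define Y where "Y = cnj Z"
    have x: "(cmod x)\<^sup>2 = s"
      using \<open>s > 0\<close> by (simp add: x_def)
    have Y: "(cmod Y)\<^sup>2 = 1 - s"
      using \<open>s > 0\<close> root d unfolding Y_def complex_mod_cnj
      by (simp add: Z_def norm_divide norm_mult power_divide power_mult_distrib)
    have "x * cnj Y * d = w - b - of_real s * (a - b)"
      using \<open>s > 0\<close> d by (simp add: x_def Y_def Z_def field_simps)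
    then show ?thesis
      by (intro that[of x Y]) (simp_all add: x Y algebra_simps)
  qed
qed

lemma binomial_value_in_num_range:
  fixes x y \<mu> :: complex
  assumes a: "\<alpha> > -1" and \<psi>: "\<psi> holomorphic_on ball 0 1" and int: "integrable (dA \<alpha>) (disc_restrict \<psi>)"
    and N: "N > 0" and \<mu>: "cmod \<mu> = 1"
    and unit: "(cmod x)\<^sup>2 + (cmod y)\<^sup>2 * bergman_moment \<alpha> N = 1"
  shows "of_real ((cmod x)\<^sup>2) * \<psi> 0 + x * cnj y * taylor_coeff \<psi> N * of_real (bergman_moment \<alpha> N)
           + of_real ((cmod y)\<^sup>2) * \<mu> ^ N * \<psi> 0 * of_real (bergman_moment \<alpha> N)
         \<in> num_range \<alpha> (wcomp \<psi> (\<lambda>z. \<mu> * z))"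
proof -
  define f where "f = disc_restrict (\<lambda>z. x + y * z ^ N)"
  have "compact ((\<lambda>z. x + y * z ^ N) ` cball 0 1)"
    by (intro compact_continuous_image continuous_intros) simp
  then have "bounded ((\<lambda>z. x + y * z ^ N) ` ball 0 1)"
    by (meson bounded_subset compact_imp_bounded ball_subset_cball image_mono)
  then have "f \<in> bergman \<alpha>"
    unfolding f_def using a by (intro bounded_holomorphic_disc_restrict_in_bergman) (auto intro!: holomorphic_intros)
  moreover have "berg_norm \<alpha> f = 1"
  proof -
    have "integrable (dA \<alpha>) (disc_restrict (\<lambda>_. 1))"
      using a by (intro integrable_dA_disc_restrict bounded_holomorphic_disc_restrict_in_bergman)
        (auto simp: image_constant_conv)
    from integral_dA_binomial_form[OF a _ this N, of 1 x y]
    have "(\<integral> z. f z * cnj (f z) \<partial>dA \<alpha>) = 1"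
      using N arg_cong[where f = complex_of_real, OF unit] by (simp add: f_def taylor_coeff_def)
    then have "complex_of_real (\<integral> z. (cmod (f z))\<^sup>2 \<partial>dA \<alpha>) = 1"
      by (simp only: complex_norm_square[symmetric] integral_complex_of_real)
    then show ?thesis
      by (simp add: berg_norm_def)
  qed
  moreover have "berg_inner \<alpha> (wcomp \<psi> (\<lambda>z. \<mu> * z) f) f
      = of_real ((cmod x)\<^sup>2) * \<psi> 0 + x * cnj y * taylor_coeff \<psi> N * of_real (bergman_moment \<alpha> N)
        + of_real ((cmod y)\<^sup>2) * \<mu> ^ N * \<psi> 0 * of_real (bergman_moment \<alpha> N)"
    using integral_dA_binomial_form[OF a \<psi> int N \<mu>, of x y] by (simp add: berg_inner_def wcomp_def f_def)
  ultimately show ?thesis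
    unfolding num_range_def by force
qed

lemma ellipse_region_subset_num_range_wcomp_rotation:
  assumes a: "\<alpha> > -1" and \<psi>: "\<psi> holomorphic_on ball 0 1" and \<mu>: "cmod \<mu> = 1"
    and bounded: "bounded_on_bergman \<alpha> (wcomp \<psi> (\<lambda>z. \<mu> * z))"
    and N: "N > 0" and coeff: "taylor_coeff \<psi> N \<noteq> 0"
  shows "ellipse_region (\<psi> 0) (\<mu> ^ N * \<psi> 0)
           (sqrt ((cmod (\<psi> 0 - \<mu> ^ N * \<psi> 0))\<^sup>2 + bergman_moment \<alpha> N * (cmod (taylor_coeff \<psi> N))\<^sup>2))
         \<subseteq> num_range \<alpha> (wcomp \<psi> (\<lambda>z. \<mu> * z))"
proof
  define c where "c = bergman_moment \<alpha> N"
  define d where "d = taylor_coeff \<psi> N * of_real (sqrt c)"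
  have c: "c > 0"
    using bergman_moment_pos[OF a] by (simp add: c_def)
  have int: "integrable (dA \<alpha>) (disc_restrict \<psi>)"
    using a \<mu> bounded holomorphic_on_imp_continuous_on[OF \<psi>]
    by (intro integrable_dA_disc_restrict disc_restrict_in_bergman_if_bounded_wcomp_rotation)
  fix w
  assume "w \<in> ellipse_region (\<psi> 0) (\<mu> ^ N * \<psi> 0)
    (sqrt ((cmod (\<psi> 0 - \<mu> ^ N * \<psi> 0))\<^sup>2 + bergman_moment \<alpha> N * (cmod (taylor_coeff \<psi> N))\<^sup>2))"
  moreover have "(cmod d)\<^sup>2 = bergman_moment \<alpha> N * (cmod (taylor_coeff \<psi> N))\<^sup>2"
    using c by (simp add: c_def d_def norm_mult power_mult_distrib)
  ultimately have "w \<in> ellipse_region (\<psi> 0) (\<mu> ^ N * \<psi> 0) (sqrt ((cmod (\<psi> 0 - \<mu> ^ N * \<psi> 0))\<^sup>2 + (cmod d)\<^sup>2))"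
    by simp
  moreover have "d \<noteq> 0"
    using c coeff by (simp add: d_def)
  ultimately obtain x Y where unit: "(cmod x)\<^sup>2 + (cmod Y)\<^sup>2 = 1"
    and w: "w = of_real ((cmod x)\<^sup>2) * \<psi> 0 + of_real ((cmod Y)\<^sup>2) * (\<mu> ^ N * \<psi> 0) + x * cnj Y * d"
    using ellipse_region_in_numerical_range_2x2 by blast
  define y where "y = Y / of_real (sqrt c)"
  have Y: "Y = y * of_real (sqrt c)"
    using c by (simp add: y_def)
  have sqrt_c: "complex_of_real (sqrt c) * complex_of_real (sqrt c) = complex_of_real c"
    using c by (simp flip: of_real_mult)
  have "(cmod x)\<^sup>2 + (cmod y)\<^sup>2 * c = 1"
    using unit c by (simp add: Y norm_mult power_mult_distrib)
  moreover have "w = of_real ((cmod x)\<^sup>2) * \<psi> 0 + x * cnj y * taylor_coeff \<psi> N * of_real c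
      + of_real ((cmod y)\<^sup>2) * \<mu> ^ N * \<psi> 0 * of_real c"
    unfolding w Y using c sqrt_c by (simp add: d_def norm_mult power_mult_distrib algebra_simps)
  ultimately show "w \<in> num_range \<alpha> (wcomp \<psi> (\<lambda>z. \<mu> * z))"
    using binomial_value_in_num_range[OF a \<psi> int N \<mu>, of x y] by (simp add: c_def)
qed

lemma exp_2pi_div_power:
  assumes "n > 0"
  shows "exp (2 * pi * \<i> / of_nat n) ^ (n * p + j) = exp (2 * pi * \<i> * of_nat j / of_nat n)"
proof -
  have "exp (2 * pi * \<i> / of_nat n) ^ (n * p + j) = exp (of_nat p * (2 * pi * \<i>) + 2 * pi * \<i> * of_nat j / of_nat n)"
    using assms by (simp add: exp_of_nat_mult[symmetric] field_simps)
  also have "\<dots> = exp (2 * pi * \<i> * of_nat j / of_nat n)"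
    by (simp add: exp_add exp_of_nat_mult)
  finally show ?thesis .
qed

theorem theorem5p5:
  fixes \<alpha> :: real and n p j :: nat and \<psi> :: "complex \<Rightarrow> complex"
  assumes "\<alpha> > -1" and "n > 0"
    and "\<psi> holomorphic_on ball 0 1"
    and "bounded_on_bergman \<alpha> (wcomp \<psi> (\<lambda>z. exp (2 * pi * \<i> / of_nat n) * z))"
    and "0 < j" and "j < n"
    and "taylor_coeff \<psi> (n * p + j) \<noteq> 0"
  shows "let lam = exp (2 * pi * \<i> / of_nat n);
             N = n * p + j;
             c = fact N * Gamma (\<alpha> + 2) / Gamma (real N + \<alpha> + 2);
             a = taylor_coeff \<psi> 0;
             b = lam ^ N * taylor_coeff \<psi> 0;
             L = sqrt ((cmod a)\<^sup>2 * (cmod (1 - exp (2 * pi * \<i> * of_nat j / of_nat n)))\<^sup>2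
                       + c * (cmod (taylor_coeff \<psi> N))\<^sup>2)
         in ellipse_region a b L \<subseteq> num_range \<alpha> (wcomp \<psi> (\<lambda>z. lam * z))
            \<and> ellipse_minor_axis a b L = sqrt c * cmod (taylor_coeff \<psi> N)"
proof -
  define lam where "lam = exp (2 * pi * \<i> / of_nat n)"
  define N where "N = n * p + j"
  define c where "c = bergman_moment \<alpha> N"
  have "cmod lam = 1" and "N > 0" and "c > 0"
    using assms(5) bergman_moment_pos[OF assms(1)] by (simp_all add: lam_def N_def c_def norm_exp_eq_Re)
  have "\<psi> 0 - lam ^ N * \<psi> 0 = \<psi> 0 * (1 - exp (2 * pi * \<i> * of_nat j / of_nat n))"
    using exp_2pi_div_power[OF assms(2), of p j] by (simp add: lam_def N_def algebra_simps)
  then have foci: "(cmod (\<psi> 0 - lam ^ N * \<psi> 0))\<^sup>2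
      = (cmod (\<psi> 0))\<^sup>2 * (cmod (1 - exp (2 * pi * \<i> * of_nat j / of_nat n)))\<^sup>2"
    by (simp add: norm_mult power_mult_distrib)
  have "ellipse_region (\<psi> 0) (lam ^ N * \<psi> 0) (sqrt ((cmod (\<psi> 0 - lam ^ N * \<psi> 0))\<^sup>2
      + c * (cmod (taylor_coeff \<psi> N))\<^sup>2)) \<subseteq> num_range \<alpha> (wcomp \<psi> (\<lambda>z. lam * z))"
    using assms \<open>cmod lam = 1\<close> \<open>N > 0\<close> unfolding c_def lam_def N_def
    by (intro ellipse_region_subset_num_range_wcomp_rotation) simp_all
  moreover have "ellipse_minor_axis (\<psi> 0) (lam ^ N * \<psi> 0) (sqrt ((cmod (\<psi> 0 - lam ^ N * \<psi> 0))\<^sup>2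
      + c * (cmod (taylor_coeff \<psi> N))\<^sup>2)) = sqrt c * cmod (taylor_coeff \<psi> N)"
    using \<open>c > 0\<close> by (simp add: ellipse_minor_axis_def real_sqrt_mult)
  moreover have "taylor_coeff \<psi> 0 = \<psi> 0"
    by (simp add: taylor_coeff_def)
  ultimately show ?thesis
    unfolding Let_def bergman_moment_def[symmetric] N_def[symmetric] lam_def[symmetric] c_def[symmetric]
    by (simp add: foci)
qed

end
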